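(* Let $p\ge5$, let $\lambda$ be the leftmost assignment and $\alpha$ any assignment on the white metallic tree. For every positive integer $\nu$, let $\lambda_\ell(\nu)$ and $\alpha_\ell(\nu)$ be the leftmost (smallest) son of $\nu$ in $\mathcal W_\lambda$ and in $\mathcal W_\alpha$ respectively, and $\delta_{\lambda\alpha}(\nu)=\alpha_\ell(\nu)-\lambda_\ell(\nu)$. Then $0\le\delta_{\lambda\alpha}(\nu)\le 1$ for every $\nu$.
   Context: Fix $p\ge5$. White metallic tree under an assignment $\alpha$, $\mathcal W_\alpha$: nodes are the positive integers, each black or white; root $1$ is white; nodes are processed in increasing order and node $\nu$ receives $p-2$ sons if it is white and $p-3$ sons if it is black, namely the smallest integers not yet used, in increasing order; an assignment $\alpha$ specifies, for each node $\nu$, the position (among the sons of $\nu$, leftmost = position $1$) of its unique black son, all other sons being white (the position may depend on the node). The leftmost assignment $\lambda$ always puts the black son at position $1$. *)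

theory Defs
  imports Main
begin

text \<open>State after processing nodes 1..k: a list cs with cs ! m = (node m is black)
  for every already generated node m (index 0 is a dummy), and the first
  unused integer nx (invariant: length cs = nx).\<close>

primrec wmt :: "nat \<Rightarrow> (nat \<Rightarrow> nat) \<Rightarrow> nat \<Rightarrow> bool list \<times> nat" where
  "wmt p \<alpha> 0 = ([False, False], 2)"
| "wmt p \<alpha> (Suc k) =
     (let cs = fst (wmt p \<alpha> k); nx = snd (wmt p \<alpha> k);
          s = (if cs ! Suc k then p - 3 else p - 2)
      in (cs @ map (\<lambda>i. i = \<alpha> (Suc k)) [1..<Suc s], nx + s))"

text \<open>Colour of node m >= 1 (True = black), determined once nodes 1..m-1 are processed.\<close>
definition wm_black :: "nat \<Rightarrow> (nat \<Rightarrow> nat) \<Rightarrow> nat \<Rightarrow> bool" where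
  "wm_black p \<alpha> m = fst (wmt p \<alpha> (m - 1)) ! m"

definition wm_nsons :: "nat \<Rightarrow> (nat \<Rightarrow> nat) \<Rightarrow> nat \<Rightarrow> nat" where
  "wm_nsons p \<alpha> m = (if wm_black p \<alpha> m then p - 3 else p - 2)"

text \<open>Leftmost (smallest) son of node nu >= 1: the first unused integer after
  processing nodes 1..nu-1.\<close>
definition wm_leftson :: "nat \<Rightarrow> (nat \<Rightarrow> nat) \<Rightarrow> nat \<Rightarrow> nat" where
  "wm_leftson p \<alpha> \<nu> = snd (wmt p \<alpha> (\<nu> - 1))"

definition wm_assignment :: "nat \<Rightarrow> (nat \<Rightarrow> nat) \<Rightarrow> bool" where
  "wm_assignment p \<alpha> \<longleftrightarrow> (\<forall>\<nu>\<ge>1. 1 \<le> \<alpha> \<nu> \<and> \<alpha> \<nu> \<le> wm_nsons p \<alpha> \<nu>)"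

definition leftmost_assignment :: "nat \<Rightarrow> nat" where
  "leftmost_assignment = (\<lambda>_. 1)"

end

theory Submission
  imports Defs
begin

text \<open>Let \<open>N\<^sub>\<alpha>(k)\<close> be the first unused integer after nodes \<open>1..k\<close> have been processed,
  so that the leftmost son of \<open>\<nu>\<close> is \<open>N\<^sub>\<alpha>(\<nu>-1)\<close>, and let \<open>B\<^sub>\<alpha>(k)\<close> count the black nodes
  among \<open>1..k\<close>. A white node has one son more than a black one, so
  \<open>N\<^sub>\<alpha>(k) + B\<^sub>\<alpha>(k) = 2 + (p-2)k\<close> whatever \<open>\<alpha>\<close> is. The black nodes are exactly the black sons
  \<open>b\<^sub>\<alpha>(v) = N\<^sub>\<alpha>(v-1) + \<alpha>(v) - 1\<close>, which increase strictly with \<open>v\<close>, so \<open>B\<^sub>\<alpha>(k)\<close> is the number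
  of \<open>v\<close> with \<open>b\<^sub>\<alpha>(v) \<le> k\<close>. By strong induction on \<open>k\<close>, the claim for indices below \<open>k\<close>
  gives \<open>b\<^sub>\<lambda>(v) \<le> b\<^sub>\<alpha>(v)\<close> and \<open>b\<^sub>\<alpha>(v) \<le> b\<^sub>\<lambda>(v+1)\<close> for the relevant \<open>v\<close>; hence
  \<open>B\<^sub>\<alpha>(k) \<le> B\<^sub>\<lambda>(k) \<le> B\<^sub>\<alpha>(k) + 1\<close>, which is the claim for \<open>k\<close> by the invariant.\<close>

definition wm_free :: "nat \<Rightarrow> (nat \<Rightarrow> nat) \<Rightarrow> nat \<Rightarrow> nat" where
  "wm_free p \<alpha> k = snd (wmt p \<alpha> k)"

definition wm_colours :: "nat \<Rightarrow> (nat \<Rightarrow> nat) \<Rightarrow> nat \<Rightarrow> bool list" where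
  "wm_colours p \<alpha> k = fst (wmt p \<alpha> k)"

definition wm_blackson :: "nat \<Rightarrow> (nat \<Rightarrow> nat) \<Rightarrow> nat \<Rightarrow> nat" where
  "wm_blackson p \<alpha> v = wm_free p \<alpha> (v - 1) + \<alpha> v - 1"

definition wm_nblack :: "nat \<Rightarrow> (nat \<Rightarrow> nat) \<Rightarrow> nat \<Rightarrow> nat" where
  "wm_nblack p \<alpha> k = card {m \<in> {1..k}. wm_black p \<alpha> m}"

definition wm_blackson_parents :: "nat \<Rightarrow> (nat \<Rightarrow> nat) \<Rightarrow> nat \<Rightarrow> nat set" where
  "wm_blackson_parents p \<alpha> k = {v. 1 \<le> v \<and> wm_blackson p \<alpha> v \<le> k}"

lemma length_wm_colours: "length (wm_colours p \<alpha> k) = wm_free p \<alpha> k"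
  by (induction k) (auto simp: wm_colours_def wm_free_def Let_def)

lemma wm_free_0: "wm_free p \<alpha> 0 = 2"
  by (simp add: wm_free_def)

lemma wm_free_Suc: "wm_free p \<alpha> (Suc k) = wm_free p \<alpha> k + wm_nsons p \<alpha> (Suc k)"
  by (simp add: wm_free_def wm_nsons_def wm_black_def Let_def)

lemma wm_colours_Suc:
  "wm_colours p \<alpha> (Suc k) =
     wm_colours p \<alpha> k @ map (\<lambda>i. i = \<alpha> (Suc k)) [1..<Suc (wm_nsons p \<alpha> (Suc k))]"
  by (simp add: wm_colours_def wm_nsons_def wm_black_def Let_def)

lemma wm_nsons_ge_2: "p \<ge> 5 \<Longrightarrow> wm_nsons p \<alpha> m \<ge> 2"
  unfolding wm_nsons_def by auto

lemma wm_free_mono: "mono (wm_free p \<alpha>)"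
  by (rule mono_iff_le_Suc[THEN iffD2]) (simp add: wm_free_Suc)

lemma wm_free_ge: "p \<ge> 5 \<Longrightarrow> k + 2 \<le> wm_free p \<alpha> k"
proof (induction k)
  case (Suc k)
  then show ?case using wm_free_Suc[of p \<alpha> k] wm_nsons_ge_2[of p \<alpha> "Suc k"] by simp
qed (simp add: wm_free_0)

lemma wm_colours_nth_stable:
  "k \<le> k' \<Longrightarrow> m < wm_free p \<alpha> k \<Longrightarrow> wm_colours p \<alpha> k' ! m = wm_colours p \<alpha> k ! m"
proof (induction k' rule: dec_induct)
  case (step n)
  have "m < length (wm_colours p \<alpha> n)"
    using step monoD[OF wm_free_mono[of p \<alpha>], of k n] length_wm_colours[of p \<alpha> n] by simp
  then show ?case using step by (simp add: wm_colours_Suc nth_append)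
qed simp

lemma wm_colours_Suc_nth_son:
  assumes "wm_free p \<alpha> k \<le> m" "m < wm_free p \<alpha> (Suc k)"
  shows "wm_colours p \<alpha> (Suc k) ! m = (m - wm_free p \<alpha> k + 1 = \<alpha> (Suc k))"
proof -
  have "m - wm_free p \<alpha> k < wm_nsons p \<alpha> (Suc k)" using assms wm_free_Suc[of p \<alpha> k] by simp
  then show ?thesis
    using assms by (simp add: wm_colours_Suc nth_append length_wm_colours del: upt_Suc)
qed

lemma wm_black_eq_nth_colours:
  assumes p: "p \<ge> 5" and m: "m < wm_free p \<alpha> k"
  shows "wm_black p \<alpha> m = wm_colours p \<alpha> k ! m"
proof -
  have m': "m < wm_free p \<alpha> (m - 1)" using wm_free_ge[OF p, of "m - 1" \<alpha>] by linarith
  have "wm_colours p \<alpha> (max k (m - 1)) ! m = wm_colours p \<alpha> k ! m"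
    by (rule wm_colours_nth_stable[OF _ m]) simp
  moreover have "wm_colours p \<alpha> (max k (m - 1)) ! m = wm_colours p \<alpha> (m - 1) ! m"
    by (rule wm_colours_nth_stable[OF _ m']) simp
  ultimately show ?thesis by (simp add: wm_black_def wm_colours_def)
qed

lemma wm_black_son_iff:
  "p \<ge> 5 \<Longrightarrow> v \<ge> 1 \<Longrightarrow> wm_free p \<alpha> (v - 1) \<le> m \<Longrightarrow> m < wm_free p \<alpha> v \<Longrightarrow>
   wm_black p \<alpha> m = (m - wm_free p \<alpha> (v - 1) + 1 = \<alpha> v)"
  using wm_black_eq_nth_colours[of p m \<alpha> v] wm_colours_Suc_nth_son[of p \<alpha> "v - 1" m] by simp

lemma wm_has_parent:
  assumes p: "p \<ge> 5" and m: "m \<ge> 2"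
  obtains v where "v \<ge> 1" "wm_free p \<alpha> (v - 1) \<le> m" "m < wm_free p \<alpha> v"
proof -
  define v where "v = (LEAST v. m < wm_free p \<alpha> v)"
  have "m < wm_free p \<alpha> m" using wm_free_ge[OF p, of m \<alpha>] by linarith
  then have v: "m < wm_free p \<alpha> v" unfolding v_def by (rule LeastI)
  then have "v \<noteq> 0" using m by (metis leD wm_free_0)
  moreover have "\<not> m < wm_free p \<alpha> (v - 1)"
    unfolding v_def by (rule not_less_Least) (use \<open>v \<noteq> 0\<close> in \<open>simp add: v_def\<close>)
  ultimately show thesis using that[of v] v by simp
qed

lemma wm_blackson_bounds:
  assumes "wm_assignment p \<alpha>" "v \<ge> 1"
  shows "wm_free p \<alpha> (v - 1) \<le> wm_blackson p \<alpha> v" "wm_blackson p \<alpha> v < wm_free p \<alpha> v"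
  using assms wm_free_Suc[of p \<alpha> "v - 1"] by (auto simp: wm_assignment_def wm_blackson_def)

lemma wm_blackson_ge:
  "p \<ge> 5 \<Longrightarrow> wm_assignment p \<alpha> \<Longrightarrow> v \<ge> 1 \<Longrightarrow> v + 1 \<le> wm_blackson p \<alpha> v"
  using wm_blackson_bounds[of p \<alpha> v] wm_free_ge[of p "v - 1" \<alpha>] by simp

lemma wm_blackson_strict_mono:
  assumes "wm_assignment p \<alpha>" "v \<ge> 1" "v < u"
  shows "wm_blackson p \<alpha> v < wm_blackson p \<alpha> u"
proof -
  have "wm_blackson p \<alpha> v < wm_free p \<alpha> v" using wm_blackson_bounds assms by simp
  also have "\<dots> \<le> wm_free p \<alpha> (u - 1)" using monoD[OF wm_free_mono] assms by simp
  also have "\<dots> \<le> wm_blackson p \<alpha> u" using wm_blackson_bounds assms by simp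
  finally show ?thesis .
qed

lemma wm_black_iff_blackson:
  assumes p: "p \<ge> 5" and A: "wm_assignment p \<alpha>" and m: "m \<ge> 1"
  shows "wm_black p \<alpha> m \<longleftrightarrow> (\<exists>v\<ge>1. m = wm_blackson p \<alpha> v)"
proof
  assume black: "wm_black p \<alpha> m"
  then have "m \<ge> 2" using m by (cases "m = 1") (auto simp: wm_black_def)
  then obtain v where v: "v \<ge> 1" "wm_free p \<alpha> (v - 1) \<le> m" "m < wm_free p \<alpha> v"
    using wm_has_parent p by blast
  then have "m = wm_blackson p \<alpha> v"
    using wm_black_son_iff[OF p v] black by (auto simp: wm_blackson_def)
  then show "\<exists>v\<ge>1. m = wm_blackson p \<alpha> v" using v by auto
next
  assume "\<exists>v\<ge>1. m = wm_blackson p \<alpha> v"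
  then obtain v where v: "v \<ge> 1" "m = wm_blackson p \<alpha> v" by auto
  moreover have "1 \<le> \<alpha> v" using A v by (auto simp: wm_assignment_def)
  ultimately show "wm_black p \<alpha> m"
    using wm_black_son_iff[OF p v(1)] wm_blackson_bounds[OF A v(1)] by (simp add: wm_blackson_def)
qed

lemma wm_free_plus_nblack:
  assumes "p \<ge> 5"
  shows "wm_free p \<alpha> k + wm_nblack p \<alpha> k = 2 + (p - 2) * k"
proof (induction k)
  case (Suc k)
  have "{m \<in> {1..Suc k}. wm_black p \<alpha> m} =
      {m \<in> {1..k}. wm_black p \<alpha> m} \<union> (if wm_black p \<alpha> (Suc k) then {Suc k} else {})"
    by (auto simp: le_Suc_eq)
  then have "wm_nblack p \<alpha> (Suc k) = wm_nblack p \<alpha> k + (if wm_black p \<alpha> (Suc k) then 1 else 0)"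
    by (auto simp: wm_nblack_def)
  moreover obtain q where "p = q + 5" using assms le_Suc_ex by (metis add.commute)
  ultimately show ?case using Suc wm_free_Suc[of p \<alpha> k] by (auto simp: wm_nsons_def algebra_simps)
qed (simp add: wm_free_0 wm_nblack_def)

lemma finite_wm_blackson_parents:
  assumes "p \<ge> 5" "wm_assignment p \<alpha>"
  shows "finite (wm_blackson_parents p \<alpha> k)"
proof (rule finite_subset)
  show "wm_blackson_parents p \<alpha> k \<subseteq> {..k}"
    using wm_blackson_ge[OF assms] by (fastforce simp: wm_blackson_parents_def)
qed simp

lemma wm_nblack_eq_card_blackson_parents:
  assumes p: "p \<ge> 5" and A: "wm_assignment p \<alpha>"
  shows "wm_nblack p \<alpha> k = card (wm_blackson_parents p \<alpha> k)"
proof -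
  have "{m \<in> {1..k}. wm_black p \<alpha> m} = wm_blackson p \<alpha> ` wm_blackson_parents p \<alpha> k"
    using wm_black_iff_blackson[OF p A] wm_blackson_ge[OF p A]
    by (fastforce simp: wm_blackson_parents_def)
  moreover have "inj_on (wm_blackson p \<alpha>) (wm_blackson_parents p \<alpha> k)"
    using wm_blackson_strict_mono[OF A]
    by (intro inj_onI) (metis less_irrefl linorder_neqE_nat mem_Collect_eq wm_blackson_parents_def)
  ultimately show ?thesis by (simp add: wm_nblack_def card_image)
qed

lemma wm_assignment_leftmost: "p \<ge> 5 \<Longrightarrow> wm_assignment p leftmost_assignment"
  unfolding wm_assignment_def
  by (metis leftmost_assignment_def one_le_numeral order_refl order_trans wm_nsons_ge_2)

lemma wm_blackson_leftmost: "wm_blackson p leftmost_assignment v = wm_free p leftmost_assignment (v - 1)"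
  by (simp add: wm_blackson_def leftmost_assignment_def)

lemma wm_blackson_parents_subset_leftmost:
  assumes p: "p \<ge> 5" and A: "wm_assignment p \<alpha>"
    and below: "\<And>j. j < k \<Longrightarrow> wm_free p leftmost_assignment j \<le> wm_free p \<alpha> j"
  shows "wm_blackson_parents p \<alpha> k \<subseteq> wm_blackson_parents p leftmost_assignment k"
proof
  fix v assume "v \<in> wm_blackson_parents p \<alpha> k"
  then have v: "v \<ge> 1" "wm_blackson p \<alpha> v \<le> k" by (auto simp: wm_blackson_parents_def)
  then have "wm_free p leftmost_assignment (v - 1) \<le> wm_free p \<alpha> (v - 1)"
    using below wm_blackson_ge[OF p A v(1)] by simp
  then show "v \<in> wm_blackson_parents p leftmost_assignment k"
    using wm_blackson_bounds[OF A v(1)] v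
    by (simp add: wm_blackson_parents_def wm_blackson_leftmost)
qed

lemma wm_blackson_parents_leftmost_subset:
  assumes p: "p \<ge> 5" and A: "wm_assignment p \<alpha>"
    and above: "\<And>j. j < k \<Longrightarrow> wm_free p \<alpha> j \<le> wm_free p leftmost_assignment j + 1"
  shows "wm_blackson_parents p leftmost_assignment k \<subseteq> insert 1 (Suc ` wm_blackson_parents p \<alpha> k)"
proof
  fix v assume "v \<in> wm_blackson_parents p leftmost_assignment k"
  then have v: "v \<ge> 1" "wm_free p leftmost_assignment (v - 1) \<le> k"
    by (auto simp: wm_blackson_parents_def wm_blackson_leftmost)
  show "v \<in> insert 1 (Suc ` wm_blackson_parents p \<alpha> k)"
  proof (cases "v = 1")
    case False
    then obtain u where u: "v = Suc u" "u \<ge> 1" using v by (cases v) auto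
    have "wm_free p \<alpha> u \<le> wm_free p leftmost_assignment u + 1"
      using above wm_free_ge[OF p, of u leftmost_assignment] u v by simp
    then have "wm_blackson p \<alpha> u \<le> k" using wm_blackson_bounds(2)[OF A u(2)] u v by simp
    then show ?thesis using u by (auto simp: wm_blackson_parents_def)
  qed simp
qed

lemma wm_free_leftmost_bounds:
  assumes p: "p \<ge> 5" and A: "wm_assignment p \<alpha>"
  shows "wm_free p leftmost_assignment k \<le> wm_free p \<alpha> k
       \<and> wm_free p \<alpha> k \<le> wm_free p leftmost_assignment k + 1"
proof (induction k rule: less_induct)
  case (less k)
  let ?l = leftmost_assignment
  let ?Sa = "wm_blackson_parents p \<alpha> k" and ?Sl = "wm_blackson_parents p ?l k"
  have L: "wm_assignment p ?l" using wm_assignment_leftmost p .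
  have fin: "finite ?Sa" "finite ?Sl" using finite_wm_blackson_parents p A L by auto
  have "card ?Sa \<le> card ?Sl"
    using card_mono[OF fin(2) wm_blackson_parents_subset_leftmost[OF p A]] less.IH by blast
  moreover have "card ?Sl \<le> card ?Sa + 1"
  proof -
    have "card ?Sl \<le> card (insert 1 (Suc ` ?Sa))"
      using card_mono[OF _ wm_blackson_parents_leftmost_subset[OF p A]] less.IH fin by blast
    also have "\<dots> \<le> card ?Sa + 1"
      using fin card_image_le[OF fin(1), of Suc] by (simp add: card_insert_if)
    finally show ?thesis .
  qed
  moreover have "wm_free p \<alpha> k + card ?Sa = wm_free p ?l k + card ?Sl"
    using wm_free_plus_nblack[OF p, of \<alpha> k] wm_free_plus_nblack[OF p, of ?l k]
      wm_nblack_eq_card_blackson_parents[OF p A] wm_nblack_eq_card_blackson_parents[OF p L]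
    by simp
  ultimately show ?case by linarith
qed

theorem lemma6:
  fixes p :: nat and \<alpha> :: "nat \<Rightarrow> nat" and \<nu> :: nat
  assumes "p \<ge> 5"
    and "wm_assignment p \<alpha>"
    and "\<nu> \<ge> 1"
  shows "wm_leftson p leftmost_assignment \<nu> \<le> wm_leftson p \<alpha> \<nu>
       \<and> wm_leftson p \<alpha> \<nu> \<le> wm_leftson p leftmost_assignment \<nu> + 1"
  using wm_free_leftmost_bounds[OF assms(1,2), of "\<nu> - 1"] by (simp add: wm_leftson_def wm_free_def)

end
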